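(* Let $A$ and $B$ be groups, and let $a\in A$, $b\in B$ be non-trivial elements such that at least one of $a,b$ does not have order $2$. Then for every $x\in A*B$ with $x\notin\langle ab\rangle$, we have $\langle ab\rangle\cap x\langle ab\rangle x^{-1}=\{e\}$. In particular $\langle ab\rangle$ is conjugate separated in $A*B$.
   Context: A subgroup $H$ of a group $G$ is conjugate separated if for every $x\in G\setminus H$ the intersection $H\cap xHx^{-1}$ is finite. *)

theory Defs
  imports "HOL-Algebra.Algebra"
begin

text \<open>Free product A * B of two groups, realised concretely by reduced words:
  lists of letters Inl a (a in A, a nontrivial) and Inr b (b in B, b nontrivial),
  with no two adjacent letters from the same factor.\<close>

definition letter_ok :: "('a,'c) monoid_scheme \<Rightarrow> ('b,'d) monoid_scheme \<Rightarrow> 'a + 'b \<Rightarrow> bool" where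
  "letter_ok A B l = (case l of Inl a \<Rightarrow> a \<in> carrier A \<and> a \<noteq> \<one>\<^bsub>A\<^esub>
                               | Inr b \<Rightarrow> b \<in> carrier B \<and> b \<noteq> \<one>\<^bsub>B\<^esub>)"

fun same_side :: "'a + 'b \<Rightarrow> 'a + 'b \<Rightarrow> bool" where
  "same_side (Inl _) (Inl _) = True"
| "same_side (Inr _) (Inr _) = True"
| "same_side _ _ = False"

definition reduced_word :: "('a,'c) monoid_scheme \<Rightarrow> ('b,'d) monoid_scheme \<Rightarrow> ('a + 'b) list \<Rightarrow> bool" where
  "reduced_word A B w = ((\<forall>l\<in>set w. letter_ok A B l) \<and>
      (\<forall>i. Suc i < length w \<longrightarrow> \<not> same_side (w ! i) (w ! Suc i)))"

fun cons_letter :: "('a,'c) monoid_scheme \<Rightarrow> ('b,'d) monoid_scheme \<Rightarrow> 'a + 'b \<Rightarrow> ('a + 'b) list \<Rightarrow> ('a + 'b) list" where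
  "cons_letter A B l [] = [l]"
| "cons_letter A B (Inl a) (Inl a' # w) =
     (let c = a \<otimes>\<^bsub>A\<^esub> a' in if c = \<one>\<^bsub>A\<^esub> then w else Inl c # w)"
| "cons_letter A B (Inr b) (Inr b' # w) =
     (let c = b \<otimes>\<^bsub>B\<^esub> b' in if c = \<one>\<^bsub>B\<^esub> then w else Inr c # w)"
| "cons_letter A B l w = l # w"

definition free_product :: "('a,'c) monoid_scheme \<Rightarrow> ('b,'d) monoid_scheme \<Rightarrow> ('a + 'b) list monoid" where
  "free_product A B = \<lparr> carrier = {w. reduced_word A B w},
                        monoid.mult = (\<lambda>w v. foldr (cons_letter A B) w v),
                        monoid.one = [] \<rparr>"

definition incl_left :: "('a,'c) monoid_scheme \<Rightarrow> 'a \<Rightarrow> ('a + 'b) list" where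
  "incl_left A a = (if a = \<one>\<^bsub>A\<^esub> then [] else [Inl a])"

definition incl_right :: "('b,'d) monoid_scheme \<Rightarrow> 'b \<Rightarrow> ('a + 'b) list" where
  "incl_right B b = (if b = \<one>\<^bsub>B\<^esub> then [] else [Inr b])"

definition conjugate_separated :: "('g,'e) monoid_scheme \<Rightarrow> 'g set \<Rightarrow> bool" where
  "conjugate_separated G H = (\<forall>x \<in> carrier G - H.
      finite (H \<inter> (\<lambda>h. x \<otimes>\<^bsub>G\<^esub> h \<otimes>\<^bsub>G\<^esub> inv\<^bsub>G\<^esub> x) ` H))"

end

theory Submission
  imports Defs "HOL-Library.Sublist"
begin

text \<open>Put \<open>g = ab\<close>, a reduced word of length two, and suppose \<open>x g\<^sup>n x\<^sup>-\<^sup>1 = g\<^sup>m\<close> with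
  \<open>n, m \<noteq> 0\<close>. Since powers of \<open>g\<close> commute, removing a factor \<open>g\<^sup>\<plusminus>\<^sup>1\<close> at the beginning of
  \<open>x\<close>, or \<open>g\<^sup>-\<^sup>1\<close> at its end, preserves an equation of this form; so by induction on the
  length we may assume that \<open>x\<close> has no such prefix or suffix. For such \<open>x \<noteq> 1\<close> at most one
  letter cancels at each junction in \<open>x g\<^sup>n\<close> and \<open>g\<^sup>m x\<close>, and comparing the first and last
  letters of these reduced words shows that \<open>x\<close> starts with \<open>g\<close>, or, when \<open>n\<close> and \<open>m\<close> have
  opposite signs, that \<open>a\<close> and \<open>b\<close> are both involutions (and then \<open>a g a\<^sup>-\<^sup>1 = g\<^sup>-\<^sup>1\<close>).\<close>

lemma (in group) m_eq_one_cancel_left: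
  assumes "x \<otimes> y = \<one>" "x \<in> carrier G" "y \<in> carrier G" "c \<in> carrier G"
  shows "x \<otimes> (y \<otimes> c) = c"
  using assms by (metis l_one m_assoc)

lemma (in group) m_eq_one_iff_eq_inv:
  "x \<in> carrier G \<Longrightarrow> y \<in> carrier G \<Longrightarrow> x \<otimes> y = \<one> \<longleftrightarrow> y = inv x"
  by (metis inv_equality inv_inv r_inv)

lemma (in group) int_pow_conj_cancel_left:
  assumes "g \<in> carrier G" "y \<in> carrier G"
    and "(g [^] (i::int) \<otimes> y) \<otimes> g [^] (n::int) = g [^] (m::int) \<otimes> (g [^] i \<otimes> y)"
  shows "y \<otimes> g [^] n = g [^] m \<otimes> y"
proof -
  have "g [^] m \<otimes> g [^] i = g [^] i \<otimes> g [^] m"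
    using assms(1) by (simp flip: int_pow_mult add: add.commute)
  then have "g [^] i \<otimes> (y \<otimes> g [^] n) = g [^] i \<otimes> (g [^] m \<otimes> y)"
    using assms by (simp add: m_assoc flip: m_assoc[of "g [^] m"])
  then show ?thesis using assms(1,2) by simp
qed

lemma (in group) int_pow_conj_cancel_right:
  assumes "g \<in> carrier G" "y \<in> carrier G"
    and "(y \<otimes> g [^] (i::int)) \<otimes> g [^] (n::int) = g [^] (m::int) \<otimes> (y \<otimes> g [^] i)"
  shows "y \<otimes> g [^] n = g [^] m \<otimes> y"
proof -
  have "g [^] i \<otimes> g [^] n = g [^] n \<otimes> g [^] i"
    using assms(1) by (simp flip: int_pow_mult add: add.commute)
  then have "(y \<otimes> g [^] n) \<otimes> g [^] i = (g [^] m \<otimes> y) \<otimes> g [^] i"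
    using assms by (simp add: m_assoc)
  then show ?thesis using assms(1,2) by simp
qed

lemma (in group) int_pow_conj_neg:
  assumes "g \<in> carrier G" "x \<in> carrier G" "x \<otimes> g [^] (n::int) = g [^] (m::int) \<otimes> x"
  shows "x \<otimes> g [^] (-n) = g [^] (-m) \<otimes> x"
proof -
  have carrier: "g [^] n \<in> carrier G" "g [^] m \<in> carrier G"
    using assms(1) by simp_all
  have "inv (g [^] m) \<otimes> x \<otimes> g [^] n = inv (g [^] m) \<otimes> (g [^] m \<otimes> x)"
    using assms carrier by (simp add: m_assoc)
  also have "\<dots> = x"
    using assms(2) carrier by (simp flip: m_assoc)
  finally have "x \<otimes> inv (g [^] n) = inv (g [^] m) \<otimes> x"
    using assms(2) carrier by (simp add: inv_solve_right')
  then show ?thesis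
    using assms(1) by (simp add: int_pow_neg)
qed

lemma (in group) ord_eq_2_if_inv_eq:
  assumes "a \<in> carrier G" "a \<noteq> \<one>" "inv a = a"
  shows "ord a = 2"
proof -
  have "a [^] (2::nat) = \<one>"
    using assms by (metis numeral_2_eq_2 nat_pow_Suc nat_pow_0 l_one r_inv)
  then have "ord a dvd 2" using assms(1) pow_eq_id by blast
  moreover have "ord a \<noteq> 1" using assms ord_eq_1 by blast
  ultimately show ?thesis
    using dvd_imp_le[of "ord a" 2] by (cases "ord a = 0") (auto simp: le_Suc_eq numeral_2_eq_2)
qed

lemma same_side_iff_isl: "same_side l l' \<longleftrightarrow> isl l = isl l'"
  by (cases l; cases l') auto

lemma reduced_word_Nil [simp]: "reduced_word A B []"
  by (simp add: reduced_word_def)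

lemma reduced_word_Cons [simp]:
  "reduced_word A B (l # w) \<longleftrightarrow>
     letter_ok A B l \<and> reduced_word A B w \<and> (w = [] \<or> isl l \<noteq> isl (hd w))"
proof -
  have all_nat: "(\<forall>i. P i) \<longleftrightarrow> P 0 \<and> (\<forall>i. P (Suc i))" for P :: "nat \<Rightarrow> bool"
    by (metis not0_implies_Suc)
  show ?thesis
    unfolding reduced_word_def by (subst all_nat) (cases w; auto simp: same_side_iff_isl)
qed

lemma reduced_word_append:
  "reduced_word A B (u @ v) \<longleftrightarrow> reduced_word A B u \<and> reduced_word A B v \<and>
     (u = [] \<or> v = [] \<or> isl (last u) \<noteq> isl (hd v))"
  by (induction u) (auto simp: hd_append)

lemma cons_letter_eq_Cons:
  "w = [] \<or> isl l \<noteq> isl (hd w) \<Longrightarrow> cons_letter A B l w = l # w"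
  by (cases w; cases l; cases "hd w") auto

fun letter_inv :: "('a,'c) monoid_scheme \<Rightarrow> ('b,'d) monoid_scheme \<Rightarrow> 'a + 'b \<Rightarrow> 'a + 'b" where
  "letter_inv A B (Inl x) = Inl (inv\<^bsub>A\<^esub> x)"
| "letter_inv A B (Inr y) = Inr (inv\<^bsub>B\<^esub> y)"

definition word_inv :: "('a,'c) monoid_scheme \<Rightarrow> ('b,'d) monoid_scheme \<Rightarrow> ('a + 'b) list \<Rightarrow> ('a + 'b) list" where
  "word_inv A B w = rev (map (letter_inv A B) w)"

lemma isl_letter_inv [simp]: "isl (letter_inv A B l) = isl l"
  by (cases l) auto

locale free_product_groups = A: group A + B: group B
  for A :: "('a,'c) monoid_scheme" and B :: "('b,'d) monoid_scheme"
begin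

abbreviation F where "F \<equiv> free_product A B"

lemma letter_ok_simps [simp]:
  "letter_ok A B (Inl x) \<longleftrightarrow> x \<in> carrier A \<and> x \<noteq> \<one>\<^bsub>A\<^esub>"
  "letter_ok A B (Inr y) \<longleftrightarrow> y \<in> carrier B \<and> y \<noteq> \<one>\<^bsub>B\<^esub>"
  by (simp_all add: letter_ok_def)

lemma letter_ok_letter_inv: "letter_ok A B l \<Longrightarrow> letter_ok A B (letter_inv A B l)"
  by (cases l) auto

lemma letter_inv_letter_inv [simp]: "letter_ok A B l \<Longrightarrow> letter_inv A B (letter_inv A B l) = l"
  by (cases l) auto

lemma word_inv_append [simp]: "word_inv A B (u @ v) = word_inv A B v @ word_inv A B u"
  by (simp add: word_inv_def)

lemma word_inv_word_inv [simp]: "reduced_word A B w \<Longrightarrow> word_inv A B (word_inv A B w) = w"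
  by (induction w) (simp_all add: word_inv_def)

lemma hd_last_word_inv:
  "w \<noteq> [] \<Longrightarrow> hd (word_inv A B w) = letter_inv A B (last w)"
  "w \<noteq> [] \<Longrightarrow> last (word_inv A B w) = letter_inv A B (hd w)"
  by (simp_all add: word_inv_def hd_rev last_rev hd_map last_map)

lemma reduced_word_cons_letter:
  assumes "letter_ok A B l" "reduced_word A B w"
  shows "reduced_word A B (cons_letter A B l w)"
proof (cases w)
  case (Cons l' w')
  then show ?thesis using assms by (cases l; cases l') (auto simp: Let_def)
qed (use assms in simp)

lemma reduced_word_foldr_cons_letter:
  "reduced_word A B u \<Longrightarrow> reduced_word A B v \<Longrightarrow> reduced_word A B (foldr (cons_letter A B) u v)"
  by (induction u) (auto intro: reduced_word_cons_letter)

lemma cons_letter_same_side: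
  assumes "isl l = isl l'"
  shows "cons_letter A B l (l' # w) = cons_letter A B l [l'] @ w"
  using assms by (cases l; cases l') (auto simp: Let_def)

text \<open>Left multiplication by letters of one factor is an action of that factor on reduced
  words; associativity of the free product rests on this.\<close>

lemma cons_letter_cons_letter:
  assumes "isl l = isl l'" "letter_ok A B l" "letter_ok A B l'" "reduced_word A B w"
  shows "cons_letter A B l (cons_letter A B l' w) = foldr (cons_letter A B) (cons_letter A B l [l']) w"
proof (cases w)
  case Nil
  then show ?thesis using assms by (cases l; cases l') (auto simp: Let_def)
next
  case (Cons l'' w')
  have w': "w' = [] \<or> isl l'' \<noteq> isl (hd w')" using assms Cons by simp
  consider (Inl) x y where "l = Inl x" "l' = Inl y" | (Inr) x y where "l = Inr x" "l' = Inr y"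
    using assms(1) by (cases l; cases l') auto
  then show ?thesis
  proof cases
    case Inl
    show ?thesis
    proof (cases l'')
      case (Inl c)
      then show ?thesis using \<open>l = Inl x\<close> \<open>l' = Inl y\<close> assms Cons w'
        by (cases "y \<otimes>\<^bsub>A\<^esub> c = \<one>\<^bsub>A\<^esub>"; cases "x \<otimes>\<^bsub>A\<^esub> y = \<one>\<^bsub>A\<^esub>")
          (auto simp: Let_def cons_letter_eq_Cons A.m_assoc A.m_eq_one_cancel_left intro: A.inv_unique)
    qed (use Inl assms Cons in \<open>simp add: Let_def\<close>)
  next
    case Inr
    show ?thesis
    proof (cases l'')
      case (Inr c)
      then show ?thesis using \<open>l = Inr x\<close> \<open>l' = Inr y\<close> assms Cons w'
        by (cases "y \<otimes>\<^bsub>B\<^esub> c = \<one>\<^bsub>B\<^esub>"; cases "x \<otimes>\<^bsub>B\<^esub> y = \<one>\<^bsub>B\<^esub>")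
          (auto simp: Let_def cons_letter_eq_Cons B.m_assoc B.m_eq_one_cancel_left intro: B.inv_unique)
    qed (use Inr assms Cons in \<open>simp add: Let_def\<close>)
  qed
qed

lemma cons_letter_inverse:
  assumes "letter_ok A B l"
  shows "cons_letter A B l (letter_inv A B l # w) = w"
    and "cons_letter A B (letter_inv A B l) (l # w) = w"
  using assms by (cases l; simp add: Let_def)+

lemma cons_letter_merge:
  assumes "isl l = isl l'" "letter_ok A B l" "letter_ok A B l'" "l' \<noteq> letter_inv A B l"
  obtains l'' where "cons_letter A B l (l' # w) = l'' # w" "isl l'' = isl l"
proof -
  have "\<exists>l''. cons_letter A B l (l' # w) = l'' # w \<and> isl l'' = isl l"
    using assms by (cases l; cases l') (auto simp: Let_def A.m_eq_one_iff_eq_inv B.m_eq_one_iff_eq_inv)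
  then show thesis using that by blast
qed

lemma foldr_cons_letter_cons_letter:
  assumes "letter_ok A B l" "reduced_word A B u" "reduced_word A B v"
  shows "foldr (cons_letter A B) (cons_letter A B l u) v = cons_letter A B l (foldr (cons_letter A B) u v)"
proof (cases u)
  case (Cons l' u')
  show ?thesis
  proof (cases "isl l = isl l'")
    case True
    have "reduced_word A B (foldr (cons_letter A B) u' v)"
      using assms Cons by (simp add: reduced_word_foldr_cons_letter)
    then have "cons_letter A B l (cons_letter A B l' (foldr (cons_letter A B) u' v)) =
        foldr (cons_letter A B) (cons_letter A B l [l'] @ u') v"
      using True assms Cons by (simp add: cons_letter_cons_letter)
    then show ?thesis
      using True Cons by (simp add: cons_letter_same_side[of l l' u'])
  qed (use Cons in \<open>simp add: cons_letter_eq_Cons\<close>)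
qed simp

lemma foldr_cons_letter_assoc:
  "reduced_word A B u \<Longrightarrow> reduced_word A B w \<Longrightarrow> reduced_word A B v \<Longrightarrow>
   foldr (cons_letter A B) (foldr (cons_letter A B) u w) v =
   foldr (cons_letter A B) u (foldr (cons_letter A B) w v)"
  by (induction u) (simp_all add: foldr_cons_letter_cons_letter reduced_word_foldr_cons_letter)

lemma reduced_word_word_inv: "reduced_word A B w \<Longrightarrow> reduced_word A B (word_inv A B w)"
proof (induction w)
  case (Cons l w)
  then show ?case
    by (cases w) (auto simp: word_inv_def reduced_word_append letter_ok_letter_inv)
qed (simp add: word_inv_def)

lemma foldr_cons_letter_word_inv: "reduced_word A B w \<Longrightarrow> foldr (cons_letter A B) (word_inv A B w) w = []"
  by (induction w) (simp_all add: word_inv_def cons_letter_inverse)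

lemma free_product_simps:
  "carrier F = {w. reduced_word A B w}" "(\<otimes>\<^bsub>F\<^esub>) = foldr (cons_letter A B)" "\<one>\<^bsub>F\<^esub> = []"
  by (simp_all add: free_product_def)

lemma group_free_product: "group F"
  by (rule groupI)
    (auto simp: free_product_simps reduced_word_foldr_cons_letter foldr_cons_letter_assoc
      intro: reduced_word_word_inv foldr_cons_letter_word_inv)

end

sublocale free_product_groups \<subseteq> F: group "free_product A B"
  by (rule group_free_product)

context free_product_groups
begin

lemma inv_free_product: "reduced_word A B w \<Longrightarrow> inv\<^bsub>F\<^esub> w = word_inv A B w"
  by (intro F.inv_equality) (simp_all add: free_product_simps reduced_word_word_inv foldr_cons_letter_word_inv)

lemma mult_free_product_eq_append: "reduced_word A B (u @ v) \<Longrightarrow> u \<otimes>\<^bsub>F\<^esub> v = u @ v"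
  by (induction u) (auto simp: free_product_simps reduced_word_append cons_letter_eq_Cons)

lemma mult_free_product_word_inv:
  assumes "reduced_word A B u" "reduced_word A B v"
  shows "u \<otimes>\<^bsub>F\<^esub> v = word_inv A B (word_inv A B v \<otimes>\<^bsub>F\<^esub> word_inv A B u)"
proof -
  have carrier: "u \<in> carrier F" "v \<in> carrier F"
    "word_inv A B u \<in> carrier F" "word_inv A B v \<in> carrier F"
    using assms by (simp_all add: free_product_simps(1) reduced_word_word_inv)
  then have "inv\<^bsub>F\<^esub> (u \<otimes>\<^bsub>F\<^esub> v) = word_inv A B v \<otimes>\<^bsub>F\<^esub> word_inv A B u"
    using assms by (simp add: F.inv_mult_group inv_free_product)
  then have "u \<otimes>\<^bsub>F\<^esub> v = inv\<^bsub>F\<^esub> (word_inv A B v \<otimes>\<^bsub>F\<^esub> word_inv A B u)"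
    using carrier by (metis F.inv_inv F.m_closed)
  then show ?thesis
    using F.m_closed[OF carrier(4,3)] by (simp add: inv_free_product free_product_simps(1))
qed

lemma prefix_word_inv_iff:
  assumes "reduced_word A B w" "reduced_word A B p"
  shows "prefix p (word_inv A B w) \<longleftrightarrow> suffix (word_inv A B p) w"
proof
  assume "prefix p (word_inv A B w)"
  then obtain u where "word_inv A B w = p @ u" by (auto simp: prefix_def)
  then have "w = word_inv A B u @ word_inv A B p"
    using assms(1) by (metis word_inv_append word_inv_word_inv)
  then show "suffix (word_inv A B p) w" by (auto simp: suffix_def)
next
  assume "suffix (word_inv A B p) w"
  then obtain u where "w = u @ word_inv A B p" by (auto simp: suffix_def)
  then have "word_inv A B w = p @ word_inv A B u" using assms(2) by simp
  then show "prefix p (word_inv A B w)" by (auto simp: prefix_def)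
qed

lemma word_inv_eq_singleton_iff:
  assumes "reduced_word A B w" "letter_ok A B l"
  shows "word_inv A B w = [l] \<longleftrightarrow> w = [letter_inv A B l]"
proof
  assume "word_inv A B w = [l]"
  then have "w = word_inv A B [l]" using assms(1) by (metis word_inv_word_inv)
  then show "w = [letter_inv A B l]" by (simp add: word_inv_def)
qed (use assms(2) in \<open>simp add: word_inv_def\<close>)

end

locale alternating_pair = free_product_groups +
  fixes l1 l2
  assumes letter_ok_l1: "letter_ok A B l1" and letter_ok_l2: "letter_ok A B l2"
    and sides_differ: "isl l1 \<noteq> isl l2"
begin

abbreviation pair_pow :: "nat \<Rightarrow> _" where
  "pair_pow k \<equiv> concat (replicate k [l1, l2])"

lemma pair_pow_Suc': "pair_pow (Suc k) = pair_pow k @ [l1, l2]"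
  by (simp flip: replicate_append_same)

lemma hd_last_pair_pow: "0 < k \<Longrightarrow> hd (pair_pow k) = l1 \<and> last (pair_pow k) = l2"
proof (cases k)
  case (Suc j)
  have "last (pair_pow (Suc j)) = l2"
    by (simp only: pair_pow_Suc') simp
  then show ?thesis using Suc by simp
qed simp

lemma reduced_pair: "reduced_word A B [l1, l2]"
  using letter_ok_l1 letter_ok_l2 sides_differ by simp

lemma reduced_pair_pow: "reduced_word A B (pair_pow k)"
proof (induction k)
  case (Suc k)
  then show ?case
    using hd_last_pair_pow[of k] letter_ok_l1 letter_ok_l2 sides_differ
    by (auto simp: reduced_word_append pair_pow_Suc' simp del: concat.simps replicate.simps)
qed simp

lemma nat_pow_pair: "[l1, l2] [^]\<^bsub>F\<^esub> (k::nat) = pair_pow k"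
proof (induction k)
  case (Suc k)
  then show ?case
    using reduced_pair_pow[of "Suc k"]
    by (simp add: mult_free_product_eq_append pair_pow_Suc' del: concat.simps replicate.simps)
qed (simp add: free_product_simps)

lemma pair_pow_commute: "pair_pow k @ [l1, l2] = [l1, l2] @ pair_pow k"
  using pair_pow_Suc'[of k] by simp

lemma pair_mult_left_other_side:
  assumes "reduced_word A B x" "isl (hd x) = isl l1"
  shows "[l1, l2] \<otimes>\<^bsub>F\<^esub> x = [l1, l2] @ x"
  using assms letter_ok_l1 letter_ok_l2 sides_differ
  by (intro mult_free_product_eq_append) (cases x; auto)

lemma pair_mult_left_same_side:
  assumes x: "reduced_word A B x" "x \<noteq> []" "isl (hd x) = isl l2"
    and not_prefix: "\<not> prefix [letter_inv A B l2, letter_inv A B l1] x"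
  defines "y \<equiv> [l1, l2] \<otimes>\<^bsub>F\<^esub> x"
  shows "y \<noteq> [] \<and> isl (hd y) = isl l1 \<and> (x \<noteq> [letter_inv A B l2] \<longrightarrow> isl (last y) = isl (last x))
    \<and> (x = [letter_inv A B l2] \<longrightarrow> y = [l1])"
proof -
  obtain l x' where x_Cons: "x = l # x'" using x by (cases x) auto
  have y_eq: "y = cons_letter A B l1 (cons_letter A B l2 x)"
    by (simp add: y_def free_product_simps)
  have l: "letter_ok A B l" "isl l = isl l2" "x' = [] \<or> isl l \<noteq> isl (hd x')"
    and x': "reduced_word A B x'"
    using x x_Cons by auto
  show ?thesis
  proof (cases "l = letter_inv A B l2")
    case True
    then have y_x': "y = cons_letter A B l1 x'"
      using y_eq x_Cons letter_ok_l2 by (simp add: cons_letter_inverse)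
    show ?thesis
    proof (cases x')
      case Nil
      then show ?thesis using y_x' x_Cons True sides_differ by simp
    next
      case (Cons d x'')
      have d: "isl d = isl l1" "letter_ok A B d"
        using l sides_differ Cons x' by auto
      have "d \<noteq> letter_inv A B l1"
        using not_prefix x_Cons True Cons by auto
      then obtain d' where "y = d' # x''" "isl d' = isl l1"
        using cons_letter_merge[of l1 d x''] d letter_ok_l1 y_x' Cons by metis
      then show ?thesis using x_Cons Cons d l sides_differ by auto
    qed
  next
    case False
    obtain l' where l': "cons_letter A B l2 x = l' # x'" "isl l' = isl l2"
      using cons_letter_merge[of l2 l x'] l letter_ok_l2 False x_Cons by metis
    then have "y = l1 # l' # x'"
      using y_eq sides_differ by (simp add: cons_letter_eq_Cons)
    then show ?thesis using x_Cons l' l False sides_differ by auto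
  qed
qed

lemma pair_mult_left:
  assumes x: "reduced_word A B x" "x \<noteq> []"
    and not_prefix: "\<not> prefix [letter_inv A B l2, letter_inv A B l1] x"
  defines "y \<equiv> [l1, l2] \<otimes>\<^bsub>F\<^esub> x"
  shows "y \<noteq> []" and "isl (hd y) = isl l1"
    and "x \<noteq> [letter_inv A B l2] \<Longrightarrow> isl (last y) = isl (last x)"
    and "x = [letter_inv A B l2] \<Longrightarrow> y = [l1]"
    and "isl (hd x) = isl l1 \<Longrightarrow> y = [l1, l2] @ x"
proof -
  have "isl (hd x) = isl l1 \<or> isl (hd x) = isl l2"
    using sides_differ by auto
  then have "y \<noteq> [] \<and> isl (hd y) = isl l1 \<and> (x \<noteq> [letter_inv A B l2] \<longrightarrow> isl (last y) = isl (last x))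
    \<and> (x = [letter_inv A B l2] \<longrightarrow> y = [l1])"
  proof
    assume "isl (hd x) = isl l1"
    then show ?thesis
      using pair_mult_left_other_side[OF x(1)] x(2) sides_differ by (auto simp: y_def)
  qed (use pair_mult_left_same_side[OF x] not_prefix y_def in simp)
  then show "y \<noteq> []" and "isl (hd y) = isl l1"
    and "x \<noteq> [letter_inv A B l2] \<Longrightarrow> isl (last y) = isl (last x)"
    and "x = [letter_inv A B l2] \<Longrightarrow> y = [l1]"
    by blast+
  show "isl (hd x) = isl l1 \<Longrightarrow> y = [l1, l2] @ x"
    using pair_mult_left_other_side[OF x(1)] by (simp add: y_def)
qed

lemma pair_pow_mult_left:
  assumes "reduced_word A B x" "x \<noteq> []" "\<not> prefix [letter_inv A B l2, letter_inv A B l1] x"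
  shows "pair_pow (Suc k) \<otimes>\<^bsub>F\<^esub> x = pair_pow k @ ([l1, l2] \<otimes>\<^bsub>F\<^esub> x)"
proof -
  have carrier: "pair_pow k \<in> carrier F" "[l1, l2] \<in> carrier F" "x \<in> carrier F"
    using reduced_pair_pow[of k] reduced_pair assms(1) by (simp_all add: free_product_simps)
  have "pair_pow (Suc k) = pair_pow k \<otimes>\<^bsub>F\<^esub> [l1, l2]"
    using reduced_pair_pow[of "Suc k"]
    by (simp add: mult_free_product_eq_append pair_pow_Suc' del: concat.simps replicate.simps)
  then have "pair_pow (Suc k) \<otimes>\<^bsub>F\<^esub> x = pair_pow k \<otimes>\<^bsub>F\<^esub> ([l1, l2] \<otimes>\<^bsub>F\<^esub> x)"
    using carrier by (simp add: F.m_assoc)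
  also have "\<dots> = pair_pow k @ ([l1, l2] \<otimes>\<^bsub>F\<^esub> x)"
  proof (rule mult_free_product_eq_append)
    have "[l1, l2] \<otimes>\<^bsub>F\<^esub> x \<in> carrier F" using carrier by simp
    then show "reduced_word A B (pair_pow k @ ([l1, l2] \<otimes>\<^bsub>F\<^esub> x))"
      using reduced_pair_pow[of k] hd_last_pair_pow[of k] pair_mult_left(1,2)[OF assms] sides_differ
      by (auto simp: reduced_word_append free_product_simps simp del: concat.simps replicate.simps)
  qed
  finally show ?thesis .
qed

lemma alternating_pair_inv: "alternating_pair A B (letter_inv A B l2) (letter_inv A B l1)"
  using letter_ok_l1 letter_ok_l2 sides_differ
  by unfold_locales (simp_all add: letter_ok_letter_inv)

lemma pair_mult_right:
  assumes x: "reduced_word A B x" "x \<noteq> []"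
    and not_suffix: "\<not> suffix [letter_inv A B l2, letter_inv A B l1] x"
  defines "y \<equiv> x \<otimes>\<^bsub>F\<^esub> [l1, l2]"
  shows "y \<noteq> []" and "isl (last y) = isl l2"
    and "x \<noteq> [letter_inv A B l1] \<Longrightarrow> isl (hd y) = isl (hd x)"
    and "x = [letter_inv A B l1] \<Longrightarrow> y = [l2]"
    and "isl (last x) = isl l2 \<Longrightarrow> y = x @ [l1, l2]"
proof -
  interpret inv: alternating_pair A B "letter_inv A B l2" "letter_inv A B l1"
    by (rule alternating_pair_inv)
  define x' where "x' = word_inv A B x"
  define y' where "y' = [letter_inv A B l2, letter_inv A B l1] \<otimes>\<^bsub>F\<^esub> x'"
  have pair: "reduced_word A B [l1, l2]" "word_inv A B [l1, l2] = [letter_inv A B l2, letter_inv A B l1]"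
    using reduced_pair by (simp_all add: word_inv_def)
  have x': "reduced_word A B x'" "x' \<noteq> []"
    using x by (simp_all add: x'_def reduced_word_word_inv) (simp add: word_inv_def)
  have "\<not> prefix [letter_inv A B (letter_inv A B l1), letter_inv A B (letter_inv A B l2)] x'"
    using not_suffix x(1) pair letter_ok_l1 letter_ok_l2 by (simp add: x'_def prefix_word_inv_iff)
  note y' = inv.pair_mult_left[OF x' this, folded y'_def]
  have y_y': "y = word_inv A B y'"
    unfolding y_def y'_def x'_def using x(1) pair by (subst mult_free_product_word_inv) simp_all
  have x_x': "x = [letter_inv A B l1] \<longleftrightarrow> x' = [l1]"
    using x(1) letter_ok_l1 by (simp add: x'_def word_inv_eq_singleton_iff)
  show "y \<noteq> []"
    using y'(1) by (simp add: y_y' word_inv_def)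
  show "isl (last y) = isl l2"
    using y'(1,2) by (simp add: y_y' hd_last_word_inv)
  show "isl (hd y) = isl (hd x)" if "x \<noteq> [letter_inv A B l1]"
    using y'(1,3) x_x' that x letter_ok_l1 by (simp add: y_y' x'_def hd_last_word_inv)
  show "y = [l2]" if "x = [letter_inv A B l1]"
    using y'(4) x_x' that letter_ok_l1 letter_ok_l2 by (simp add: y_y' word_inv_def)
  show "y = x @ [l1, l2]" if "isl (last x) = isl l2"
  proof -
    have "y' = word_inv A B [l1, l2] @ x'"
      using y'(5) that x pair by (simp add: x'_def hd_last_word_inv)
    then show ?thesis
      using x(1) pair(1) by (simp only: y_y' word_inv_append word_inv_word_inv x'_def)
  qed
qed

lemma pair_pow_mult_right:
  assumes "reduced_word A B x" "x \<noteq> []" "\<not> suffix [letter_inv A B l2, letter_inv A B l1] x"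
  shows "x \<otimes>\<^bsub>F\<^esub> pair_pow (Suc k) = (x \<otimes>\<^bsub>F\<^esub> [l1, l2]) @ pair_pow k"
proof -
  have carrier: "pair_pow k \<in> carrier F" "[l1, l2] \<in> carrier F" "x \<in> carrier F"
    using reduced_pair_pow[of k] reduced_pair assms(1) by (simp_all add: free_product_simps)
  have "pair_pow (Suc k) = [l1, l2] \<otimes>\<^bsub>F\<^esub> pair_pow k"
    using reduced_pair_pow[of "Suc k"] by (simp add: mult_free_product_eq_append)
  then have "x \<otimes>\<^bsub>F\<^esub> pair_pow (Suc k) = (x \<otimes>\<^bsub>F\<^esub> [l1, l2]) \<otimes>\<^bsub>F\<^esub> pair_pow k"
    using carrier by (simp add: F.m_assoc)
  also have "\<dots> = (x \<otimes>\<^bsub>F\<^esub> [l1, l2]) @ pair_pow k"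
  proof (rule mult_free_product_eq_append)
    have "x \<otimes>\<^bsub>F\<^esub> [l1, l2] \<in> carrier F" using carrier by simp
    then show "reduced_word A B ((x \<otimes>\<^bsub>F\<^esub> [l1, l2]) @ pair_pow k)"
      using reduced_pair_pow[of k] hd_last_pair_pow[of k] pair_mult_right(1,2)[OF assms] sides_differ
      by (auto simp: reduced_word_append free_product_simps simp del: concat.simps replicate.simps)
  qed
  finally show ?thesis .
qed

end

locale free_product_ab = free_product_groups +
  fixes a b
  assumes a: "a \<in> carrier A" "a \<noteq> \<one>\<^bsub>A\<^esub>" and b: "b \<in> carrier B" "b \<noteq> \<one>\<^bsub>B\<^esub>"
    and not_both_involutions: "\<not> (inv\<^bsub>A\<^esub> a = a \<and> inv\<^bsub>B\<^esub> b = b)"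
begin

sublocale pos: alternating_pair A B "Inl a" "Inr b"
  using a b by unfold_locales simp_all

sublocale neg: alternating_pair A B "Inr (inv\<^bsub>B\<^esub> b)" "Inl (inv\<^bsub>A\<^esub> a)"
  using pos.alternating_pair_inv by simp

abbreviation g where "g \<equiv> [Inl a, Inr b]"

abbreviation g_inv where "g_inv \<equiv> [Inr (inv\<^bsub>B\<^esub> b), Inl (inv\<^bsub>A\<^esub> a)]"

lemma g_carrier: "g \<in> carrier F"
  using pos.reduced_pair by (simp add: free_product_simps)

lemma inv_g: "inv\<^bsub>F\<^esub> g = g_inv"
  using pos.reduced_pair by (simp add: inv_free_product word_inv_def)

lemma int_pow_g_nonneg: "0 \<le> k \<Longrightarrow> g [^]\<^bsub>F\<^esub> k = pos.pair_pow (nat k)"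
  by (metis pow_nat pos.nat_pow_pair)

lemma int_pow_g_neg: "k < 0 \<Longrightarrow> g [^]\<^bsub>F\<^esub> k = neg.pair_pow (nat (- k))"
proof -
  assume "k < 0"
  then have "g [^]\<^bsub>F\<^esub> k = inv\<^bsub>F\<^esub> (g [^]\<^bsub>F\<^esub> nat (- k))"
    by (subst int_pow_def2) simp
  also have "\<dots> = (inv\<^bsub>F\<^esub> g) [^]\<^bsub>F\<^esub> nat (- k)"
    using g_carrier by (rule F.nat_pow_inv[symmetric])
  finally show ?thesis
    by (simp only: inv_g neg.nat_pow_pair)
qed

lemma mult_pow_neq_pow_mult_pos_pos:
  assumes x: "reduced_word A B x" "x \<noteq> []"
    and not_affix: "\<not> prefix g x" "\<not> prefix g_inv x" "\<not> suffix g_inv x"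
  shows "x \<otimes>\<^bsub>F\<^esub> pos.pair_pow (Suc n) \<noteq> pos.pair_pow (Suc m) \<otimes>\<^bsub>F\<^esub> x"
proof
  define P where "P = x \<otimes>\<^bsub>F\<^esub> g"
  define Q where "Q = g \<otimes>\<^bsub>F\<^esub> x"
  have not_affix': "\<not> suffix [letter_inv A B (Inr b), letter_inv A B (Inl a)] x"
    "\<not> prefix [letter_inv A B (Inr b), letter_inv A B (Inl a)] x"
    using not_affix by simp_all
  note P = pos.pair_mult_right[OF x not_affix'(1), folded P_def]
  note Q = pos.pair_mult_left[OF x not_affix'(2), folded Q_def]
  assume "x \<otimes>\<^bsub>F\<^esub> pos.pair_pow (Suc n) = pos.pair_pow (Suc m) \<otimes>\<^bsub>F\<^esub> x"
  then have PQ: "P @ pos.pair_pow n = pos.pair_pow m @ Q"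
    using pos.pair_pow_mult_right[OF x not_affix'(1)] pos.pair_pow_mult_left[OF x not_affix'(2)]
    by (simp add: P_def Q_def)
  have "isl (hd (pos.pair_pow m @ Q))"
    using pos.hd_last_pair_pow[of m] Q(1,2) by (cases m) (auto simp: hd_append)
  then have "isl (hd P)"
    using PQ P(1) by (metis hd_append2)
  then have "x \<noteq> [Inl (inv\<^bsub>A\<^esub> a)]"
    using P(4) by auto
  with \<open>isl (hd P)\<close> have x_hd: "x \<noteq> [Inl (inv\<^bsub>A\<^esub> a)]" "isl (hd x)"
    using P(3) by simp_all
  have "\<not> isl (last (P @ pos.pair_pow n))"
    using pos.hd_last_pair_pow[of n] P(1,2) by (cases n) auto
  then have "\<not> isl (last Q)"
    using PQ Q(1) by (metis last_appendR)
  then have "x \<noteq> [Inr (inv\<^bsub>B\<^esub> b)]"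
    using Q(4) by auto
  with \<open>\<not> isl (last Q)\<close> have x_last: "x \<noteq> [Inr (inv\<^bsub>B\<^esub> b)]" "\<not> isl (last x)"
    using Q(3) by simp_all
  have "x @ g @ pos.pair_pow n = (pos.pair_pow m @ g) @ x"
    using PQ P(5) Q(5) x_hd x_last by simp
  then have "x @ g @ pos.pair_pow n = g @ pos.pair_pow m @ x"
    by (simp only: pos.pair_pow_commute append_assoc)
  moreover obtain p q r where "x = p # q # r"
    using x(2) x_hd x_last by (cases x rule: list.exhaust; cases "tl x") auto
  ultimately show False
    using not_affix(1) by (simp add: prefix_def)
qed

text \<open>This is where \<open>not_both_involutions\<close> is needed: if \<open>a\<^sup>2 = b\<^sup>2 = 1\<close>, then \<open>x = a\<close> and
  \<open>x = b\<^sup>-\<^sup>1\<close> conjugate \<open>g\<close> into \<open>g\<^sup>-\<^sup>1\<close>.\<close>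

lemma mult_pow_neq_pow_mult_pos_neg:
  assumes x: "reduced_word A B x" "x \<noteq> []"
    and not_affix: "\<not> prefix g x" "\<not> prefix g_inv x" "\<not> suffix g_inv x"
  shows "x \<otimes>\<^bsub>F\<^esub> pos.pair_pow (Suc n) \<noteq> neg.pair_pow (Suc m) \<otimes>\<^bsub>F\<^esub> x"
proof
  define P where "P = x \<otimes>\<^bsub>F\<^esub> g"
  define Q where "Q = g_inv \<otimes>\<^bsub>F\<^esub> x"
  have not_affix': "\<not> suffix [letter_inv A B (Inr b), letter_inv A B (Inl a)] x"
    "\<not> prefix [letter_inv A B (Inl (inv\<^bsub>A\<^esub> a)), letter_inv A B (Inr (inv\<^bsub>B\<^esub> b))] x"
    using not_affix a b by simp_all
  note P = pos.pair_mult_right[OF x not_affix'(1), folded P_def]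
  note Q = neg.pair_mult_left[OF x not_affix'(2), folded Q_def]
  assume "x \<otimes>\<^bsub>F\<^esub> pos.pair_pow (Suc n) = neg.pair_pow (Suc m) \<otimes>\<^bsub>F\<^esub> x"
  then have PQ: "P @ pos.pair_pow n = neg.pair_pow m @ Q"
    using pos.pair_pow_mult_right[OF x not_affix'(1)] neg.pair_pow_mult_left[OF x not_affix'(2)]
    by (simp add: P_def Q_def)
  have "\<not> isl (hd (neg.pair_pow m @ Q))"
    using neg.hd_last_pair_pow[of m] Q(1,2) by (cases m) (auto simp: hd_append)
  then have "\<not> isl (hd P)"
    using PQ P(1) by (metis hd_append2)
  then have x_hd: "x = [Inl (inv\<^bsub>A\<^esub> a)] \<or> \<not> isl (hd x)"
    using P(3) by auto
  have "\<not> isl (last (P @ pos.pair_pow n))"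
    using pos.hd_last_pair_pow[of n] P(1,2) by (cases n) auto
  then have "\<not> isl (last Q)"
    using PQ Q(1) by (metis last_appendR)
  then have x_last: "x = [Inl a] \<or> \<not> isl (last x)"
    using Q(3) a by auto
  show False
  proof (cases "isl (hd x)")
    case True
    then have "x = [Inl (inv\<^bsub>A\<^esub> a)]" "x = [Inl a]"
      using x_hd x_last by auto
    then have "inv\<^bsub>A\<^esub> a = a" "P = [Inr b]" "Q = [Inr (inv\<^bsub>B\<^esub> b)]"
      using P(4) Q(4) a by simp_all
    then have "Inr b = hd (neg.pair_pow m @ [Inr (inv\<^bsub>B\<^esub> b)])"
      using PQ by (metis append_Cons list.sel(1))
    also have "\<dots> = Inr (inv\<^bsub>B\<^esub> b)"
      using neg.hd_last_pair_pow[of m] by (cases m) auto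
    finally show False
      using \<open>inv\<^bsub>A\<^esub> a = a\<close> not_both_involutions by simp
  next
    case False
    then have "\<not> isl (last x)" using x_last by auto
    then have "x @ g @ pos.pair_pow n = (neg.pair_pow m @ g_inv) @ x"
      using PQ P(5) Q(5) False by simp
    then have eq: "x @ g @ pos.pair_pow n = g_inv @ neg.pair_pow m @ x"
      by (simp only: neg.pair_pow_commute append_assoc)
    obtain p r where x_Cons: "x = p # r" using x(2) by (cases x) auto
    show False
    proof (cases r)
      case Nil
      then have "inv\<^bsub>A\<^esub> a = a" "Inr b # pos.pair_pow n = neg.pair_pow m @ [p]"
        using eq x_Cons by auto
      moreover have "last (Inr b # pos.pair_pow n) = Inr b"
        using pos.hd_last_pair_pow[of n] by (cases n) auto
      ultimately show False
        using eq x_Cons Nil not_both_involutions by auto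
    next
      case (Cons q r')
      then show False using eq x_Cons not_affix(2) by (simp add: prefix_def)
    qed
  qed
qed

lemma pow_mult_neq_pow_mult:
  assumes x: "reduced_word A B x" "x \<noteq> []"
    and not_affix: "\<not> prefix g x" "\<not> prefix g_inv x" "\<not> suffix g_inv x"
    and nonzero: "n \<noteq> 0" "m \<noteq> 0"
  shows "x \<otimes>\<^bsub>F\<^esub> g [^]\<^bsub>F\<^esub> (n::int) \<noteq> g [^]\<^bsub>F\<^esub> (m::int) \<otimes>\<^bsub>F\<^esub> x"
proof -
  have pos_case: "x \<otimes>\<^bsub>F\<^esub> g [^]\<^bsub>F\<^esub> n' \<noteq> g [^]\<^bsub>F\<^esub> m' \<otimes>\<^bsub>F\<^esub> x"
    if n'_pos: "0 < n'" and m'_nonzero: "m' \<noteq> 0" for n' m' :: int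
  proof -
    obtain k where "nat n' = Suc k" using n'_pos by (metis gr0_implies_Suc zero_less_nat_eq)
    then have lhs: "x \<otimes>\<^bsub>F\<^esub> g [^]\<^bsub>F\<^esub> n' = x \<otimes>\<^bsub>F\<^esub> pos.pair_pow (Suc k)"
      using n'_pos by (simp add: int_pow_g_nonneg)
    consider "0 < m'" | "m' < 0" using m'_nonzero by linarith
    then show ?thesis
    proof cases
      case 1
      then obtain l where "nat m' = Suc l" by (metis gr0_implies_Suc zero_less_nat_eq)
      then show ?thesis
        using 1 mult_pow_neq_pow_mult_pos_pos[OF x not_affix] lhs
        by (simp add: int_pow_g_nonneg)
    next
      case 2
      then obtain l where "nat (- m') = Suc l" by (metis gr0_implies_Suc zero_less_nat_eq neg_0_less_iff_less)
      then show ?thesis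
        using 2 mult_pow_neq_pow_mult_pos_neg[OF x not_affix] lhs
        by (simp add: int_pow_g_neg)
    qed
  qed
  show ?thesis
  proof (cases "0 < n")
    case False
    have "x \<in> carrier F" using x(1) by (simp add: free_product_simps)
    then show ?thesis
      using pos_case[of "- n" "- m"] False nonzero F.int_pow_conj_neg[OF g_carrier] by auto
  qed (use pos_case nonzero in blast)
qed

lemma pow_conjugate_imp_pow:
  "x \<in> carrier F \<Longrightarrow> n \<noteq> 0 \<Longrightarrow> m \<noteq> 0 \<Longrightarrow>
   x \<otimes>\<^bsub>F\<^esub> g [^]\<^bsub>F\<^esub> (n::int) = g [^]\<^bsub>F\<^esub> (m::int) \<otimes>\<^bsub>F\<^esub> x \<Longrightarrow>
   \<exists>k::int. x = g [^]\<^bsub>F\<^esub> k"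
proof (induction "length x" arbitrary: x rule: less_induct)
  case less
  have x: "reduced_word A B x" using less.prems(1) by (simp add: free_product_simps)
  have strip: "\<exists>k::int. x = g [^]\<^bsub>F\<^esub> k"
    if split: "x = g [^]\<^bsub>F\<^esub> i @ y \<or> x = y @ g [^]\<^bsub>F\<^esub> i" and nonempty: "g [^]\<^bsub>F\<^esub> i \<noteq> []"
    for i :: int and y
  proof -
    have y: "y \<in> carrier F" "length y < length x"
      using x split nonempty by (auto simp: reduced_word_append free_product_simps(1))
    have x_eq: "x = g [^]\<^bsub>F\<^esub> i \<otimes>\<^bsub>F\<^esub> y \<or> x = y \<otimes>\<^bsub>F\<^esub> g [^]\<^bsub>F\<^esub> i"
      using x split by (auto simp: mult_free_product_eq_append)
    then have "y \<otimes>\<^bsub>F\<^esub> g [^]\<^bsub>F\<^esub> n = g [^]\<^bsub>F\<^esub> m \<otimes>\<^bsub>F\<^esub> y"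
      using less.prems(4) F.int_pow_conj_cancel_left[OF g_carrier y(1)]
        F.int_pow_conj_cancel_right[OF g_carrier y(1)] by blast
    then obtain k :: int where "y = g [^]\<^bsub>F\<^esub> k"
      using less.hyps less.prems(2,3) y by blast
    then have "x = g [^]\<^bsub>F\<^esub> (i + k) \<or> x = g [^]\<^bsub>F\<^esub> (k + i)"
      using x_eq g_carrier by (simp add: F.int_pow_mult)
    then show ?thesis by blast
  qed
  have g_pow_one: "g [^]\<^bsub>F\<^esub> (1 :: int) = g" "g [^]\<^bsub>F\<^esub> (- 1 :: int) = g_inv"
    using g_carrier by (simp_all add: F.int_pow_neg inv_g)
  consider "prefix g x" | "prefix g_inv x" | "suffix g_inv x" | "x = []"
    | "x \<noteq> []" "\<not> prefix g x" "\<not> prefix g_inv x" "\<not> suffix g_inv x"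
    by blast
  then show ?case
  proof cases
    case 1
    then show ?thesis using strip[of 1] g_pow_one by (auto simp: prefix_def)
  next
    case 2
    then show ?thesis using strip[of "- 1"] g_pow_one by (auto simp: prefix_def)
  next
    case 3
    then show ?thesis using strip[of "- 1"] g_pow_one by (auto simp: suffix_def)
  next
    case 4
    then have "x = g [^]\<^bsub>F\<^esub> (0::int)" by (simp add: free_product_simps)
    then show ?thesis ..
  next
    case 5
    then show ?thesis using pow_mult_neq_pow_mult[OF x] less.prems(2-4) by blast
  qed
qed

lemma conjugate_inter_cyclic_trivial:
  assumes x: "x \<in> carrier F - generate F {g}"
  shows "generate F {g} \<inter> (\<lambda>h. x \<otimes>\<^bsub>F\<^esub> h \<otimes>\<^bsub>F\<^esub> inv\<^bsub>F\<^esub> x) ` generate F {g} = {\<one>\<^bsub>F\<^esub>}"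
proof
  have one: "\<one>\<^bsub>F\<^esub> \<in> generate F {g}"
    by (rule generate.one)
  have "x \<otimes>\<^bsub>F\<^esub> \<one>\<^bsub>F\<^esub> \<otimes>\<^bsub>F\<^esub> inv\<^bsub>F\<^esub> x = \<one>\<^bsub>F\<^esub>"
    using x by simp
  then show "{\<one>\<^bsub>F\<^esub>} \<subseteq> generate F {g} \<inter> (\<lambda>h. x \<otimes>\<^bsub>F\<^esub> h \<otimes>\<^bsub>F\<^esub> inv\<^bsub>F\<^esub> x) ` generate F {g}"
    using one by force
next
  show "generate F {g} \<inter> (\<lambda>h. x \<otimes>\<^bsub>F\<^esub> h \<otimes>\<^bsub>F\<^esub> inv\<^bsub>F\<^esub> x) ` generate F {g} \<subseteq> {\<one>\<^bsub>F\<^esub>}"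
  proof (rule subsetI, rule ccontr)
    fix y
    assume "y \<in> generate F {g} \<inter> (\<lambda>h. x \<otimes>\<^bsub>F\<^esub> h \<otimes>\<^bsub>F\<^esub> inv\<^bsub>F\<^esub> x) ` generate F {g}"
      and y_nontrivial: "y \<notin> {\<one>\<^bsub>F\<^esub>}"
    then obtain m n :: int where y: "y = g [^]\<^bsub>F\<^esub> m" and y_conj: "y = x \<otimes>\<^bsub>F\<^esub> g [^]\<^bsub>F\<^esub> n \<otimes>\<^bsub>F\<^esub> inv\<^bsub>F\<^esub> x"
      unfolding F.generate_pow[OF g_carrier] by blast
    have nonzero: "m \<noteq> 0" "n \<noteq> 0"
      using y y_conj y_nontrivial x by auto
    have "g [^]\<^bsub>F\<^esub> m \<otimes>\<^bsub>F\<^esub> x = x \<otimes>\<^bsub>F\<^esub> g [^]\<^bsub>F\<^esub> n \<otimes>\<^bsub>F\<^esub> inv\<^bsub>F\<^esub> x \<otimes>\<^bsub>F\<^esub> x"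
      using y y_conj by simp
    also have "\<dots> = x \<otimes>\<^bsub>F\<^esub> g [^]\<^bsub>F\<^esub> n"
      using x g_carrier by (simp add: F.m_assoc)
    finally have "x \<in> generate F {g}"
      using pow_conjugate_imp_pow[of x n m] x nonzero unfolding F.generate_pow[OF g_carrier] by auto
    then show False using x by simp
  qed
qed

end

theorem lemma2p4:
  fixes A :: "('a,'c) monoid_scheme" and B :: "('b,'d) monoid_scheme"
    and a :: 'a and b :: 'b
  assumes "group A" and "group B"
    and "a \<in> carrier A" and "a \<noteq> \<one>\<^bsub>A\<^esub>"
    and "b \<in> carrier B" and "b \<noteq> \<one>\<^bsub>B\<^esub>"
    and "group.ord A a \<noteq> 2 \<or> group.ord B b \<noteq> 2"
  shows "(\<forall>x \<in> carrier (free_product A B) -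
              generate (free_product A B)
                {incl_left A a \<otimes>\<^bsub>free_product A B\<^esub> incl_right B b}.
           generate (free_product A B)
                {incl_left A a \<otimes>\<^bsub>free_product A B\<^esub> incl_right B b}
           \<inter> (\<lambda>h. x \<otimes>\<^bsub>free_product A B\<^esub> h \<otimes>\<^bsub>free_product A B\<^esub> inv\<^bsub>free_product A B\<^esub> x) `
               generate (free_product A B)
                {incl_left A a \<otimes>\<^bsub>free_product A B\<^esub> incl_right B b}
           = {\<one>\<^bsub>free_product A B\<^esub>})
       \<and> conjugate_separated (free_product A B)
           (generate (free_product A B)
              {incl_left A a \<otimes>\<^bsub>free_product A B\<^esub> incl_right B b})"
proof -
  have "\<not> (inv\<^bsub>A\<^esub> a = a \<and> inv\<^bsub>B\<^esub> b = b)"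
    using group.ord_eq_2_if_inv_eq[of A a] group.ord_eq_2_if_inv_eq[of B b] assms by auto
  with assms interpret free_product_ab A B a b
    by (intro free_product_ab.intro free_product_groups.intro free_product_ab_axioms.intro) auto
  have "incl_left A a \<otimes>\<^bsub>F\<^esub> incl_right B b = g"
    using assms by (simp add: incl_left_def incl_right_def free_product_simps)
  then show ?thesis
    using conjugate_inter_cyclic_trivial by (simp add: conjugate_separated_def)
qed

end
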